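(* Let $d\ge3$, let $\Delta$ be a shellable simplicial $(d-1)$-sphere with facet-ridge graph $G$, let $2\le k\le d-1$, let $\mathcal{S}_k$ be a star-like $k$-system of $G$, and fix a good acyclic orientation $\mathcal{O}$ of $G$. Then $\mathcal{S}_k=\{\mathcal{S}_k(\sigma):\sigma\in\Delta,\ \dim\sigma=d-k-1\}$. In particular, two star-like $k$-systems of $G$ are identical if and only if they agree on all principal $k$-frames representing the $(d-k-1)$-dimensional faces of $\Delta$ (i.e., $\mathcal{S}_k(\sigma)=\mathcal{S}'_k(\sigma)$ for all such $\sigma$).
   Context: $\Delta$ is a simplicial complex homeomorphic to the $(d-1)$-sphere; facets have $d$ elements, ridges $d-1$; $\dim\sigma=|\sigma|-1$. Shellable: there is an ordering $T_1,\dots,T_n$ of the facets with $\overline{T}_i\cap(\overline{T}_1\cup\cdots\cup\overline{T}_{i-1})$ pure $(d-2)$-dimensional for $i\ge2$ ($\overline{T}$ = all subsets of $T$). The facet-ridge graph $G$ has facets as vertices, adjacent iff they share a ridge; vertex $t$ corresponds to facet $T$. For $0\le k\le d$ and a face $\sigma$ with $|\sigma|=d-k$, $\mathcal{V}^\Delta_k(\sigma)$ is the set of vertices of $G$ whose facets contain $\sigma$; $G[\mathcal{V}^\Delta_k(\sigma)]$ is $k$-regular. An orientation of $G$ is good if for every such $k,\sigma$ the induced orientation on $G[\mathcal{V}^\Delta_k(\sigma)]$ has exactly one sink; acyclic means no directed cycle. A $k$-frame is a subgraph of $G$ isomorphic to $K_{1,k}$, with root the degree-$k$ vertex, written $\langle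 t,t^1,\dots,t^k\rangle$. Given good acyclic $\mathcal{O}$ and a face $\sigma$ of dimension $d-k-1$, the principal $k$-frame representing $\sigma$ is the $k$-frame whose root is the unique sink $t$ of $G[\mathcal{V}^\Delta_k(\sigma)]$ and whose other vertices are the $k$ neighbours of $t$ in $G[\mathcal{V}^\Delta_k(\sigma)]$ (equivalently, the unique $k$-frame $\langle t,t^1,\dots,t^k\rangle$ with $T\cap T^1\cap\cdots\cap T^k=\sigma$ and all edges directed into $t$). A $k$-system of $G$ is a set $\mathcal{S}$ of subsets of $V(G)$ such that $G[S]$ is $k$-regular for every $S\in\mathcal{S}$ and the vertex set of every $k$-frame of $G$ is contained in exactly one member of $\mathcal{S}$; for a $k$-frame $\Phi$, $\mathcal{S}(\Phi)$ is that member, and $\mathcal{S}(\sigma):=\mathcal{S}(\Phi)$ for $\Phi$ the principal $k$-frame representing $\sigma$. A $k$-system $\mathcal{S}_k$ is star-like if every good acyclic orientation of $G$ induces exactly one sink on $G[S]$ for every $S\in\mathcal{S}_k$. *)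

theory Defs
  imports "HOL-Analysis.Analysis"
begin

definition simplicial_complex :: "'a set set \<Rightarrow> bool" where
  "simplicial_complex D \<longleftrightarrow> finite D \<and> D \<noteq> {} \<and> (\<forall>F\<in>D. finite F) \<and>
     (\<forall>F\<in>D. \<forall>G. G \<subseteq> F \<longrightarrow> G \<in> D)"

definition facets :: "'a set set \<Rightarrow> 'a set set" where
  "facets D = {F\<in>D. \<forall>G\<in>D. F \<subseteq> G \<longrightarrow> G = F}"

text \<open>Geometric realization: points are barycentric-coordinate functions whose support is a
  face, with the subspace topology of the product topology on 'a \<Rightarrow> real.\<close>
definition geom_realization :: "'a set set \<Rightarrow> ('a \<Rightarrow> real) topology" where
  "geom_realization D = subtopology (powertop_real UNIV)
     {f. (\<forall>v. 0 \<le> f v) \<and> {v. f v \<noteq> 0} \<in> D \<and> sum f {v. f v \<noteq> 0} = 1}"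

definition simplicial_sphere :: "nat \<Rightarrow> 'a set set \<Rightarrow> bool" where
  "simplicial_sphere d D \<longleftrightarrow> simplicial_complex D \<and>
     geom_realization D homeomorphic_space nsphere (d - 1) \<and>
     (\<forall>F\<in>facets D. card F = d)"

definition pure_of_card :: "nat \<Rightarrow> 'a set set \<Rightarrow> bool" where
  "pure_of_card m K \<longleftrightarrow> (\<forall>F\<in>K. (\<forall>G\<in>K. F \<subseteq> G \<longrightarrow> G = F) \<longrightarrow> card F = m)"

definition shellable :: "nat \<Rightarrow> 'a set set \<Rightarrow> bool" where
  "shellable d D \<longleftrightarrow> (\<exists>Ts. distinct Ts \<and> set Ts = facets D \<and>
     (\<forall>i. 1 \<le> i \<and> i < length Ts \<longrightarrow>
        pure_of_card (d - 1) (Pow (Ts ! i) \<inter> (\<Union>j<i. Pow (Ts ! j)))))"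

text \<open>Vertices of the facet-ridge graph are the facets themselves; two facets are adjacent
  iff they share a ridge (a (d-1)-element set).\<close>
definition fr_adj :: "nat \<Rightarrow> 'a set set \<Rightarrow> 'a set \<Rightarrow> 'a set \<Rightarrow> bool" where
  "fr_adj d D T T' \<longleftrightarrow> T \<in> facets D \<and> T' \<in> facets D \<and> T \<noteq> T' \<and> card (T \<inter> T') = d - 1"

definition Vk :: "'a set set \<Rightarrow> 'a set \<Rightarrow> 'a set set" where
  "Vk D \<sigma> = {T\<in>facets D. \<sigma> \<subseteq> T}"

text \<open>An orientation: a relation Or (Or T T' = edge directed from T to T') such that
  each edge gets exactly one direction and only edges are directed.\<close>
definition orientation :: "nat \<Rightarrow> 'a set set \<Rightarrow> ('a set \<Rightarrow> 'a set \<Rightarrow> bool) \<Rightarrow> bool" where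
  "orientation d D Or \<longleftrightarrow> (\<forall>T T'. Or T T' \<longrightarrow> fr_adj d D T T') \<and>
     (\<forall>T T'. fr_adj d D T T' \<longrightarrow> (Or T T' \<longleftrightarrow> \<not> Or T' T))"

definition is_sink :: "('a set \<Rightarrow> 'a set \<Rightarrow> bool) \<Rightarrow> 'a set set \<Rightarrow> 'a set \<Rightarrow> bool" where
  "is_sink Or S t \<longleftrightarrow> t \<in> S \<and> (\<forall>u\<in>S. \<not> Or t u)"

definition good_orientation :: "nat \<Rightarrow> 'a set set \<Rightarrow> ('a set \<Rightarrow> 'a set \<Rightarrow> bool) \<Rightarrow> bool" where
  "good_orientation d D Or \<longleftrightarrow> orientation d D Or \<and>
     (\<forall>k\<le>d. \<forall>\<sigma>\<in>D. card \<sigma> = d - k \<longrightarrow> (\<exists>!t. is_sink Or (Vk D \<sigma>) t))"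

definition acyclic_orientation :: "('a set \<Rightarrow> 'a set \<Rightarrow> bool) \<Rightarrow> bool" where
  "acyclic_orientation Or \<longleftrightarrow> (\<forall>T. \<not> Or\<^sup>+\<^sup>+ T T)"

text \<open>A k-frame: a subgraph isomorphic to K_{1,k}, given by its root t and the set N of its
  k leaves, all adjacent to t.\<close>
definition k_frame :: "nat \<Rightarrow> 'a set set \<Rightarrow> nat \<Rightarrow> 'a set \<Rightarrow> 'a set set \<Rightarrow> bool" where
  "k_frame d D k t N \<longleftrightarrow> t \<in> facets D \<and> card N = k \<and> (\<forall>u\<in>N. fr_adj d D t u)"

definition k_regular_on :: "nat \<Rightarrow> 'a set set \<Rightarrow> nat \<Rightarrow> 'a set set \<Rightarrow> bool" where
  "k_regular_on d D k S \<longleftrightarrow> S \<subseteq> facets D \<and> (\<forall>t\<in>S. card {u\<in>S. fr_adj d D t u} = k)"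

definition k_system :: "nat \<Rightarrow> 'a set set \<Rightarrow> nat \<Rightarrow> 'a set set set \<Rightarrow> bool" where
  "k_system d D k SS \<longleftrightarrow> (\<forall>S\<in>SS. k_regular_on d D k S) \<and>
     (\<forall>t N. k_frame d D k t N \<longrightarrow> (\<exists>!S. S \<in> SS \<and> insert t N \<subseteq> S))"

definition star_like :: "nat \<Rightarrow> 'a set set \<Rightarrow> nat \<Rightarrow> 'a set set set \<Rightarrow> bool" where
  "star_like d D k SS \<longleftrightarrow> k_system d D k SS \<and>
     (\<forall>Or. good_orientation d D Or \<and> acyclic_orientation Or \<longrightarrow>
        (\<forall>S\<in>SS. \<exists>!t. is_sink Or S t))"

definition principal_root :: "('a set \<Rightarrow> 'a set \<Rightarrow> bool) \<Rightarrow> 'a set set \<Rightarrow> 'a set \<Rightarrow> 'a set" where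
  "principal_root Or D \<sigma> = (THE t. is_sink Or (Vk D \<sigma>) t)"

definition principal_leaves ::
  "nat \<Rightarrow> 'a set set \<Rightarrow> ('a set \<Rightarrow> 'a set \<Rightarrow> bool) \<Rightarrow> 'a set \<Rightarrow> 'a set set" where
  "principal_leaves d D Or \<sigma> = {u\<in>Vk D \<sigma>. fr_adj d D (principal_root Or D \<sigma>) u}"

definition sys_of_face ::
  "nat \<Rightarrow> 'a set set \<Rightarrow> ('a set \<Rightarrow> 'a set \<Rightarrow> bool) \<Rightarrow> 'a set set set \<Rightarrow> 'a set \<Rightarrow> 'a set set" where
  "sys_of_face d D Or SS \<sigma> = (THE S. S \<in> SS \<and>
      insert (principal_root Or D \<sigma>) (principal_leaves d D Or \<sigma>) \<subseteq> S)"

end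

(*
  A simplicial sphere is a pseudomanifold: its realization is locally Euclidean of dimension
  d - 1, so by invariance of domain every ridge R lies in exactly two facets. If T = R + a were
  the only facet through R, a Euclidean neighbourhood of the barycentre of R would embed openly
  into the closed simplex T, whose coordinate at a is nonnegative but vanishes at that barycentre.
  If R + a, R + b and R + c were facets, the two simplices R + a and R + b would already contain
  an open neighbourhood of the interior of R, which the segment towards the vertex c leaves at once.

  Hence the neighbours of a facet t that contain a face sigma of t are exactly the facets opposite
  the vertices in t - sigma. For S in a star-like k-system, let t be the unique sink of G[S]
  and N its k neighbours in S. They are opposite a k-set X of vertices of t, and for
  sigma = t - X the principal k-frame representing sigma is <t, N>, so S = S(sigma).
*)

theory Submission
  imports Defs "HOL-Homology.Invariance_of_Domain"
begin

lemma continuous_map_into_Euclidean_space: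
  assumes "\<And>i. continuous_map Y euclideanreal (\<lambda>y. f y i)"
    and "\<And>y. y \<in> topspace Y \<Longrightarrow> f y \<in> topspace (Euclidean_space m)"
  shows "continuous_map Y (Euclidean_space m) f"
  using assms unfolding Euclidean_space_def continuous_map_in_subtopology
  by (auto simp: continuous_map_componentwise_UNIV)

lemma continuous_map_Euclidean_space_coordinate [continuous_intros]:
  "continuous_map (subtopology (Euclidean_space m) V) euclideanreal (\<lambda>x. x i)"
  unfolding Euclidean_space_def subtopology_subtopology
  by (intro continuous_intros) auto

lemma openin_all_positive:
  assumes "finite I" "\<And>i. i \<in> I \<Longrightarrow> continuous_map X euclideanreal (f i)"
  shows "openin X {x \<in> topspace X. \<forall>i\<in>I. 0 < f i x}"
proof -
  have "openin X {x \<in> topspace X. f i x \<in> {0<..}}" if "i \<in> I" for i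
    using openin_continuous_map_preimage[OF assms(2)[OF that], of "{0<..}"] by simp
  then have "openin X ((\<Inter>i\<in>I. {x \<in> topspace X. f i x \<in> {0<..}}) \<inter> topspace X)"
    by (rule openin_INT[OF assms(1)])
  moreover have "(\<Inter>i\<in>I. {x \<in> topspace X. f i x \<in> {0<..}}) \<inter> topspace X
      = {x \<in> topspace X. \<forall>i\<in>I. 0 < f i x}"
    by auto
  ultimately show ?thesis
    by simp
qed

lemma continuous_path_near_zero_in_openin:
  assumes "continuous_map euclideanreal X \<gamma>" "openin X U" "\<gamma> 0 \<in> U"
  obtains e :: real where "e > 0" "\<forall>t. \<bar>t\<bar> < e \<longrightarrow> \<gamma> t \<in> U"
proof -
  have "open {t. \<gamma> t \<in> U}"
    using openin_continuous_map_preimage[OF assms(1,2)] by simp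
  moreover have "0 \<in> {t. \<gamma> t \<in> U}"
    using assms(3) by simp
  ultimately obtain e where e: "e > 0" "ball 0 e \<subseteq> {t. \<gamma> t \<in> U}"
    using open_contains_ball by blast
  have "\<forall>t. \<bar>t\<bar> < e \<longrightarrow> \<gamma> t \<in> U"
    using e(2) by (auto simp: dist_real_def subset_iff)
  then show thesis
    using that e(1) by blast
qed

lemma continuous_map_coordinate_line:
  assumes "z \<in> topspace (Euclidean_space m)" "i < m"
  shows "continuous_map euclideanreal (Euclidean_space m) (\<lambda>t. z(i := z i + t))"
proof (rule continuous_map_into_Euclidean_space)
  show "continuous_map euclideanreal euclideanreal (\<lambda>t. (z(i := z i + t)) j)" for j
    by (cases "j = i") (auto intro: continuous_intros)
  show "z(i := z i + t) \<in> topspace (Euclidean_space m)" for t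
    using assms unfolding topspace_Euclidean_space by auto
qed

lemma openin_Euclidean_space_nonneg_imp_pos:
  assumes U: "openin (Euclidean_space m) U" "\<forall>z\<in>U. \<forall>i. 0 \<le> z i"
    and z: "z \<in> U" and i: "i < m"
  shows "0 < z i"
proof -
  have z_top: "z \<in> topspace (Euclidean_space m)"
    using openin_subset[OF U(1)] z by blast
  have "z(i := z i + 0) \<in> U"
    using z by simp
  then obtain \<epsilon> :: real where \<epsilon>: "\<epsilon> > 0" "\<forall>t. \<bar>t\<bar> < \<epsilon> \<longrightarrow> z(i := z i + t) \<in> U"
    by (rule continuous_path_near_zero_in_openin[OF continuous_map_coordinate_line[OF z_top i] U(1)])
  have "\<bar>- (\<epsilon> / 2)\<bar> < \<epsilon>"
    using \<epsilon>(1) by simp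
  then have "z(i := z i + - (\<epsilon> / 2)) \<in> U"
    using \<epsilon>(2) by blast
  then have "0 \<le> (z(i := z i + - (\<epsilon> / 2))) i"
    using U(2) by blast
  then show ?thesis
    using \<epsilon>(1) by simp
qed

section \<open>Locally Euclidean spaces\<close>

definition locally_Euclidean :: "nat \<Rightarrow> 'a topology \<Rightarrow> bool" where
  "locally_Euclidean m X \<longleftrightarrow> (\<forall>p\<in>topspace X. \<exists>W B. openin X W \<and> p \<in> W \<and>
     openin (Euclidean_space m) B \<and> subtopology X W homeomorphic_space subtopology (Euclidean_space m) B)"

lemma locally_Euclidean_chart:
  assumes "locally_Euclidean m X" and "p \<in> topspace X"
  obtains W B \<phi> where "openin X W" "p \<in> W" "openin (Euclidean_space m) B"
    "homeomorphic_map (subtopology X W) (subtopology (Euclidean_space m) B) \<phi>"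
  using assms unfolding locally_Euclidean_def homeomorphic_space by blast

lemma chart_invariance_of_domain:
  assumes W: "openin X W" and B: "openin (Euclidean_space m) B"
    and \<phi>: "homeomorphic_map (subtopology X W) (subtopology (Euclidean_space m) B) \<phi>"
    and V: "openin (Euclidean_space m) V"
    and g: "continuous_map (subtopology (Euclidean_space m) V) (subtopology X W) g"
    and inj: "inj_on g V"
  shows "openin X (g ` V)"
proof -
  have gV: "g ` V \<subseteq> topspace (subtopology X W)"
    using continuous_map_image_subset_topspace[OF g] topspace_subtopology_subset[OF openin_subset[OF V]]
    by metis
  have "continuous_map (subtopology (Euclidean_space m) V) (Euclidean_space m) (\<phi> \<circ> g)"
    using continuous_map_into_fulltopology continuous_map_compose[OF g homeomorphic_imp_continuous_map[OF \<phi>]]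
    by blast
  moreover have "inj_on (\<phi> \<circ> g) V"
    using comp_inj_on[OF inj inj_on_subset[OF homeomorphic_imp_injective_map[OF \<phi>] gV]] .
  ultimately have "openin (Euclidean_space m) (\<phi> ` g ` V)"
    using invariance_of_domain_Euclidean_space[OF V] by (metis image_comp)
  moreover have "\<phi> ` g ` V \<subseteq> B"
    using homeomorphic_imp_surjective_map[OF \<phi>] gV by (auto simp: image_subset_iff)
  ultimately have "openin (subtopology (Euclidean_space m) B) (\<phi> ` g ` V)"
    using openin_open_subtopology[OF B] by blast
  then have "openin (subtopology X W) (g ` V)"
    using homeomorphic_map_openness[OF \<phi> gV] by blast
  then show ?thesis
    using openin_trans_full W by blast
qed

lemma locally_Euclidean_invariance_of_domain:
  assumes X: "locally_Euclidean m X"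
    and V: "openin (Euclidean_space m) V"
    and g: "continuous_map (subtopology (Euclidean_space m) V) X g"
    and inj: "inj_on g V"
  shows "openin X (g ` V)"
  unfolding openin_subopen[of _ "g ` V"]
proof
  fix y assume "y \<in> g ` V"
  then obtain x where x: "x \<in> V" "y = g x"
    by blast
  have V_sub: "V \<subseteq> topspace (Euclidean_space m)"
    using openin_subset[OF V] .
  then have "y \<in> topspace X"
    using continuous_map_image_subset_topspace[OF g] x topspace_subtopology_subset by fastforce
  then obtain W B \<phi> where W: "openin X W" "y \<in> W" and B: "openin (Euclidean_space m) B"
    and \<phi>: "homeomorphic_map (subtopology X W) (subtopology (Euclidean_space m) B) \<phi>"
    by (rule locally_Euclidean_chart[OF X])
  define V' where "V' = {v \<in> topspace (subtopology (Euclidean_space m) V). g v \<in> W}"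
  have V'_open: "openin (Euclidean_space m) V'"
    unfolding V'_def by (rule openin_trans_full[OF openin_continuous_map_preimage[OF g W(1)] V])
  have V'_sub: "V' \<subseteq> V"
    unfolding V'_def by auto
  have "continuous_map (subtopology (Euclidean_space m) V') (subtopology X W) g"
    unfolding continuous_map_in_subtopology
    using continuous_map_from_subtopology_mono[OF g V'_sub] unfolding V'_def by auto
  then have "openin X (g ` V')"
    using chart_invariance_of_domain[OF W(1) B \<phi> V'_open] inj_on_subset[OF inj V'_sub] by blast
  moreover have "y \<in> g ` V'"
    using x W V_sub unfolding V'_def by auto
  ultimately show "\<exists>T. openin X T \<and> y \<in> T \<and> T \<subseteq> g ` V"
    using V'_sub by blast
qed

lemma locally_Euclidean_parametrization:
  assumes X: "locally_Euclidean m X" and A: "openin X A" and p: "p \<in> A"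
  obtains B e where "openin (Euclidean_space m) B"
    "continuous_map (subtopology (Euclidean_space m) B) X e" "inj_on e B" "e ` B \<subseteq> A" "p \<in> e ` B"
proof -
  have "p \<in> topspace X"
    using openin_subset[OF A] p by blast
  then obtain W B \<phi> where W: "openin X W" "p \<in> W" and B: "openin (Euclidean_space m) B"
    and \<phi>: "homeomorphic_map (subtopology X W) (subtopology (Euclidean_space m) B) \<phi>"
    by (rule locally_Euclidean_chart[OF X])
  then obtain \<psi> where \<phi>\<psi>: "homeomorphic_maps (subtopology X W) (subtopology (Euclidean_space m) B) \<phi> \<psi>"
    using homeomorphic_map_maps by blast
  have AW_sub: "A \<inter> W \<subseteq> topspace (subtopology X W)"
    using openin_subset[OF A] by auto
  have "openin (subtopology X W) (A \<inter> W)"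
    using A openin_subtopology by blast
  then have "openin (subtopology (Euclidean_space m) B) (\<phi> ` (A \<inter> W))"
    using homeomorphic_map_openness[OF \<phi> AW_sub] by blast
  then have B'_open: "openin (Euclidean_space m) (\<phi> ` (A \<inter> W))"
    using openin_trans_full B by blast
  have B'_sub: "\<phi> ` (A \<inter> W) \<subseteq> B"
    using openin_subset[OF \<open>openin (subtopology (Euclidean_space m) B) _\<close>] by auto
  have \<psi>\<phi>: "\<psi> (\<phi> x) = x" if "x \<in> A \<inter> W" for x
    using \<phi>\<psi> AW_sub that unfolding homeomorphic_maps_def by blast
  have \<psi>: "continuous_map (subtopology (Euclidean_space m) B) (subtopology X W) \<psi>"
    using \<phi>\<psi> unfolding homeomorphic_maps_def by blast
  show thesis
  proof
    show "openin (Euclidean_space m) (\<phi> ` (A \<inter> W))"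
      using B'_open .
    show "continuous_map (subtopology (Euclidean_space m) (\<phi> ` (A \<inter> W))) X \<psi>"
      using continuous_map_into_fulltopology[OF continuous_map_from_subtopology_mono[OF \<psi> B'_sub]] .
    show "inj_on \<psi> (\<phi> ` (A \<inter> W))"
      by (rule inj_on_inverseI[where g = \<phi>]) (auto simp: \<psi>\<phi>)
    show "\<psi> ` \<phi> ` (A \<inter> W) \<subseteq> A" "p \<in> \<psi> ` \<phi> ` (A \<inter> W)"
      using \<psi>\<phi> p W(2) by (force, force)
  qed
qed

lemma homeomorphic_map_neighbourhood:
  assumes h: "homeomorphic_map X Y h" and U: "openin Y U" and p: "p \<in> topspace X" "h p \<in> U"
  obtains W where "openin X W" "p \<in> W" "subtopology X W homeomorphic_space subtopology Y U"
proof
  let ?W = "{x \<in> topspace X. h x \<in> U}"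
  show "openin X ?W"
    using openin_continuous_map_preimage[OF homeomorphic_imp_continuous_map[OF h] U] .
  show "p \<in> ?W"
    using p by blast
  show "subtopology X ?W homeomorphic_space subtopology Y U"
    using homeomorphic_map_subtopologies_alt[OF h, of U ?W] homeomorphic_map_imp_homeomorphic_space
    by blast
qed

lemma locally_Euclidean_homeomorphic_space:
  assumes "X homeomorphic_space Y" and Y: "locally_Euclidean m Y"
  shows "locally_Euclidean m X"
  unfolding locally_Euclidean_def
proof
  fix p assume p: "p \<in> topspace X"
  obtain h where h: "homeomorphic_map X Y h"
    using assms(1) homeomorphic_space by blast
  have "h p \<in> topspace Y"
    using p h homeomorphic_imp_surjective_map by blast
  then obtain U B where U: "openin Y U" "h p \<in> U" and B: "openin (Euclidean_space m) B"
    and UB: "subtopology Y U homeomorphic_space subtopology (Euclidean_space m) B"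
    using Y unfolding locally_Euclidean_def by blast
  obtain W where "openin X W" "p \<in> W" "subtopology X W homeomorphic_space subtopology Y U"
    using homeomorphic_map_neighbourhood[OF h U(1) p U(2)] .
  with B UB show "\<exists>W B. openin X W \<and> p \<in> W \<and> openin (Euclidean_space m) B \<and>
      subtopology X W homeomorphic_space subtopology (Euclidean_space m) B"
    using homeomorphic_space_trans by blast
qed

lemma locally_Euclidean_homogeneous:
  assumes U: "openin X U" and B: "openin (Euclidean_space m) B"
    and UB: "subtopology X U homeomorphic_space subtopology (Euclidean_space m) B"
    and move: "\<And>p. p \<in> topspace X \<Longrightarrow> \<exists>h. homeomorphic_map X X h \<and> h p \<in> U"
  shows "locally_Euclidean m X"
  unfolding locally_Euclidean_def
proof
  fix p assume p: "p \<in> topspace X"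
  then obtain h where h: "homeomorphic_map X X h" "h p \<in> U"
    using move by blast
  obtain W where "openin X W" "p \<in> W" "subtopology X W homeomorphic_space subtopology X U"
    using homeomorphic_map_neighbourhood[OF h(1) U p h(2)] .
  with B UB show "\<exists>W B. openin X W \<and> p \<in> W \<and> openin (Euclidean_space m) B \<and>
      subtopology X W homeomorphic_space subtopology (Euclidean_space m) B"
    using homeomorphic_space_trans by blast
qed

section \<open>Spheres are locally Euclidean\<close>

lemma topspace_nsphere_eq:
  "topspace (nsphere m) = {x. (\<Sum>i\<le>m. x i ^ 2) = 1 \<and> (\<forall>i>m. x i = 0)}"
  by (simp add: nsphere)

lemma continuous_map_into_nsphere:
  assumes "\<And>i. continuous_map Y euclideanreal (\<lambda>y. f y i)"
    and "\<And>y. y \<in> topspace Y \<Longrightarrow> f y \<in> topspace (nsphere m)"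
  shows "continuous_map Y (nsphere m) f"
  using assms unfolding nsphere[of m] continuous_map_in_subtopology
  by (auto simp: continuous_map_componentwise_UNIV)

lemma sum_atMost_eq_lessThan_plus: "(\<Sum>i\<le>(m::nat). f i) = (\<Sum>i<m. f i) + (f m :: real)"
  by (simp add: lessThan_Suc_atMost[symmetric])

definition upper_hemisphere :: "nat \<Rightarrow> (nat \<Rightarrow> real) set" where
  "upper_hemisphere m = {x \<in> topspace (nsphere m). 0 < x m}"

definition Euclidean_unit_ball :: "nat \<Rightarrow> (nat \<Rightarrow> real) set" where
  "Euclidean_unit_ball m = {z \<in> topspace (Euclidean_space m). (\<Sum>i<m. z i ^ 2) < 1}"

lemma openin_upper_hemisphere: "openin (nsphere m) (upper_hemisphere m)"
  unfolding upper_hemisphere_def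
  using openin_continuous_map_preimage[OF continuous_map_nsphere_projection, of "{0<..}" m m]
  by simp

lemma openin_Euclidean_unit_ball: "openin (Euclidean_space m) (Euclidean_unit_ball m)"
proof -
  have "continuous_map (Euclidean_space m) euclideanreal (\<lambda>z. (\<Sum>i<m. z i ^ 2))"
    using continuous_map_Euclidean_space_coordinate[where V = UNIV]
    by (intro continuous_intros) auto
  from openin_continuous_map_preimage[OF this, of "{..<1}"]
  show ?thesis
    unfolding Euclidean_unit_ball_def by simp
qed

definition sphere_lift :: "nat \<Rightarrow> (nat \<Rightarrow> real) \<Rightarrow> nat \<Rightarrow> real" where
  "sphere_lift m z = z(m := sqrt (1 - (\<Sum>i<m. z i ^ 2)))"

lemma sphere_lift_in_upper_hemisphere:
  assumes "z \<in> Euclidean_unit_ball m"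
  shows "sphere_lift m z \<in> upper_hemisphere m"
proof -
  have z: "\<forall>i\<ge>m. z i = 0" "(\<Sum>i<m. z i ^ 2) < 1"
    using assms unfolding Euclidean_unit_ball_def topspace_Euclidean_space by auto
  have "(\<Sum>i<m. sphere_lift m z i ^ 2) = (\<Sum>i<m. z i ^ 2)"
    unfolding sphere_lift_def by (intro sum.cong) auto
  then have "(\<Sum>i\<le>m. sphere_lift m z i ^ 2) = 1"
    using z(2) by (simp add: sum_atMost_eq_lessThan_plus sphere_lift_def)
  then show ?thesis
    using z unfolding upper_hemisphere_def topspace_nsphere_eq sphere_lift_def by auto
qed

lemma upper_hemisphere_equator_projection:
  assumes "x \<in> upper_hemisphere m"
  shows "x(m := 0) \<in> Euclidean_unit_ball m" and "sphere_lift m (x(m := 0)) = x"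
proof -
  have x: "(\<Sum>i<m. x i ^ 2) + x m ^ 2 = 1" "\<forall>i>m. x i = 0" "0 < x m"
    using assms unfolding upper_hemisphere_def topspace_nsphere_eq
    by (auto simp: sum_atMost_eq_lessThan_plus)
  have sum_eq: "(\<Sum>i<m. (x(m := 0)) i ^ 2) = (\<Sum>i<m. x i ^ 2)"
    by (intro sum.cong) auto
  have "0 < x m ^ 2"
    using x(3) by simp
  then have "(\<Sum>i<m. (x(m := 0)) i ^ 2) < 1"
    using x(1) sum_eq by linarith
  then show "x(m := 0) \<in> Euclidean_unit_ball m"
    using x(2) unfolding Euclidean_unit_ball_def topspace_Euclidean_space by (auto simp: le_less)
  have "1 - (\<Sum>i<m. x i ^ 2) = x m ^ 2"
    using x(1) by linarith
  then have "sqrt (1 - (\<Sum>i<m. (x(m := 0)) i ^ 2)) = x m"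
    using x(3) sum_eq by simp
  then show "sphere_lift m (x(m := 0)) = x"
    unfolding sphere_lift_def by auto
qed

lemma upper_hemisphere_homeomorphic_unit_ball:
  "subtopology (nsphere m) (upper_hemisphere m) homeomorphic_space
     subtopology (Euclidean_space m) (Euclidean_unit_ball m)"
  unfolding homeomorphic_space_def
proof (intro exI)
  let ?H = "subtopology (nsphere m) (upper_hemisphere m)"
  let ?B = "subtopology (Euclidean_space m) (Euclidean_unit_ball m)"
  have top_H: "topspace ?H = upper_hemisphere m"
    using topspace_subtopology_subset[OF openin_subset[OF openin_upper_hemisphere]] .
  have top_B: "topspace ?B = Euclidean_unit_ball m"
    using topspace_subtopology_subset[OF openin_subset[OF openin_Euclidean_unit_ball]] .
  have "continuous_map ?H (Euclidean_space m) (\<lambda>x. x(m := 0))"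
  proof (rule continuous_map_into_Euclidean_space)
    show "continuous_map ?H euclideanreal (\<lambda>x. (x(m := 0)) i)" for i
      by (cases "i = m") (auto intro: continuous_map_from_subtopology continuous_map_nsphere_projection)
    show "x(m := 0) \<in> topspace (Euclidean_space m)" if "x \<in> topspace ?H" for x
      using upper_hemisphere_equator_projection(1) that top_H
      unfolding Euclidean_unit_ball_def by blast
  qed
  moreover have "continuous_map ?B (nsphere m) (sphere_lift m)"
  proof (rule continuous_map_into_nsphere)
    show "continuous_map ?B euclideanreal (\<lambda>z. sphere_lift m z i)" for i
      unfolding sphere_lift_def by (cases "i = m") (auto intro!: continuous_intros)
    show "sphere_lift m z \<in> topspace (nsphere m)" if "z \<in> topspace ?B" for z
      using sphere_lift_in_upper_hemisphere that top_B unfolding upper_hemisphere_def by blast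
  qed
  moreover have "(sphere_lift m z)(m := 0) = z" if "z \<in> Euclidean_unit_ball m" for z
    using that unfolding sphere_lift_def Euclidean_unit_ball_def topspace_Euclidean_space by auto
  ultimately show "homeomorphic_maps ?H ?B (\<lambda>x. x(m := 0)) (sphere_lift m)"
    unfolding homeomorphic_maps_def continuous_map_in_subtopology top_H top_B
    using upper_hemisphere_equator_projection sphere_lift_in_upper_hemisphere by auto
qed

definition signed_swap :: "nat \<Rightarrow> nat \<Rightarrow> real \<Rightarrow> (nat \<Rightarrow> real) \<Rightarrow> nat \<Rightarrow> real" where
  "signed_swap j m s y = (\<lambda>i. if i = m then s * y j else if i = j then s * y m else y i)"

lemma signed_swap_signed_swap:
  assumes "s * s = 1"
  shows "signed_swap j m s (signed_swap j m s y) = y"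
proof -
  have "s * (s * r) = r" for r
    using assms by (simp add: mult.assoc[symmetric])
  then show ?thesis
    unfolding signed_swap_def by (intro ext) auto
qed

lemma signed_swap_in_nsphere:
  assumes "j \<le> m" "s * s = 1" "y \<in> topspace (nsphere m)"
  shows "signed_swap j m s y \<in> topspace (nsphere m)"
proof -
  let ?t = "Transposition.transpose j m"
  have sq: "(signed_swap j m s y i) ^ 2 = (y (?t i)) ^ 2" for i
    unfolding signed_swap_def Transposition.transpose_def using assms(2)
    by (auto simp: power_mult_distrib power2_eq_square mult.assoc[symmetric])
  have "(\<Sum>i\<le>m. (signed_swap j m s y i) ^ 2) = (\<Sum>i\<le>m. (y (?t i)) ^ 2)"
    using sq by simp
  also have "\<dots> = (\<Sum>i\<le>m. (y i) ^ 2)"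
    by (rule sum.reindex_bij_witness[where i = ?t and j = ?t])
      (use assms(1) in \<open>auto simp: Transposition.transpose_def\<close>)
  finally show ?thesis
    using assms unfolding topspace_nsphere_eq signed_swap_def by auto
qed

lemma homeomorphic_map_signed_swap:
  assumes "j \<le> m" "s * s = 1"
  shows "homeomorphic_map (nsphere m) (nsphere m) (signed_swap j m s)"
proof -
  have "continuous_map (nsphere m) (nsphere m) (signed_swap j m s)"
  proof (rule continuous_map_into_nsphere)
    show "continuous_map (nsphere m) euclideanreal (\<lambda>y. signed_swap j m s y i)" for i
      unfolding signed_swap_def
      by (auto intro!: continuous_map_real_mult continuous_map_nsphere_projection)
    show "signed_swap j m s y \<in> topspace (nsphere m)" if "y \<in> topspace (nsphere m)" for y
      using signed_swap_in_nsphere[OF assms that] .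
  qed
  then have "homeomorphic_maps (nsphere m) (nsphere m) (signed_swap j m s) (signed_swap j m s)"
    unfolding homeomorphic_maps_def using signed_swap_signed_swap[OF assms(2)] by blast
  then show ?thesis
    using homeomorphic_map_maps by blast
qed

lemma locally_Euclidean_nsphere: "locally_Euclidean m (nsphere m)"
proof (rule locally_Euclidean_homogeneous[OF openin_upper_hemisphere openin_Euclidean_unit_ball
      upper_hemisphere_homeomorphic_unit_ball])
  fix p assume p: "p \<in> topspace (nsphere m)"
  have "\<exists>j\<le>m. p j \<noteq> 0"
  proof (rule ccontr)
    assume "\<not> ?thesis"
    then have "(\<Sum>i\<le>m. p i ^ 2) = 0"
      by auto
    then show False
      using p by (simp add: topspace_nsphere_eq)
  qed
  then obtain j where j: "j \<le> m" "p j \<noteq> 0"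
    by blast
  define s where "s = sgn (p j)"
  have s: "s * s = 1"
    using j unfolding s_def by (auto simp: sgn_if)
  have "signed_swap j m s p \<in> upper_hemisphere m"
    using signed_swap_in_nsphere[OF j(1) s p] j(2)
    unfolding upper_hemisphere_def signed_swap_def s_def by (auto simp: sgn_if)
  then show "\<exists>h. homeomorphic_map (nsphere m) (nsphere m) h \<and> h p \<in> upper_hemisphere m"
    using homeomorphic_map_signed_swap[OF j(1) s] by blast
qed

section \<open>Geometric realizations\<close>

lemma simplicial_complex_finite: "simplicial_complex D \<Longrightarrow> finite D"
  unfolding simplicial_complex_def by blast

lemma simplicial_complex_finite_face: "simplicial_complex D \<Longrightarrow> F \<in> D \<Longrightarrow> finite F"
  unfolding simplicial_complex_def by blast

lemma simplicial_complex_subset_face: "simplicial_complex D \<Longrightarrow> F \<in> D \<Longrightarrow> G \<subseteq> F \<Longrightarrow> G \<in> D"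
  unfolding simplicial_complex_def by blast

lemma facet_in_complex: "T \<in> facets D \<Longrightarrow> T \<in> D"
  unfolding facets_def by blast

lemma face_subset_facet:
  assumes "simplicial_complex D" "\<sigma> \<in> D"
  obtains T where "T \<in> facets D" "\<sigma> \<subseteq> T"
proof -
  have fin: "finite {F\<in>D. \<sigma> \<subseteq> F}"
    by (rule finite_subset[OF _ simplicial_complex_finite[OF assms(1)]]) blast
  have ne: "{F\<in>D. \<sigma> \<subseteq> F} \<noteq> {}"
    using assms(2) by auto
  obtain T where T: "T \<in> {F\<in>D. \<sigma> \<subseteq> F}" and max: "\<forall>F\<in>{F\<in>D. \<sigma> \<subseteq> F}. T \<le> F \<longrightarrow> T = F"
    using finite_has_maximal[OF fin ne] ..
  have "T \<in> facets D"
    unfolding facets_def using T max by auto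
  with T show thesis
    using that by simp
qed

lemma topspace_geom_realization:
  "topspace (geom_realization D) = {f. (\<forall>v. 0 \<le> f v) \<and> {v. f v \<noteq> 0} \<in> D \<and> sum f {v. f v \<noteq> 0} = 1}"
  by (simp add: geom_realization_def)

lemma continuous_map_geom_realization_coordinate:
  "continuous_map (geom_realization D) euclideanreal (\<lambda>f. f v)"
  unfolding geom_realization_def
  by (rule continuous_map_from_subtopology) (rule continuous_map_product_projection, simp)

lemma continuous_map_into_geom_realization:
  assumes "\<And>v. continuous_map Y euclideanreal (\<lambda>y. g y v)"
    and "\<And>y. y \<in> topspace Y \<Longrightarrow> g y \<in> topspace (geom_realization D)"
  shows "continuous_map Y (geom_realization D) g"
  using assms unfolding geom_realization_def continuous_map_in_subtopology
  by (auto simp: continuous_map_componentwise_UNIV)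

lemma in_geom_realizationI:
  assumes "simplicial_complex D" "F \<in> D" "\<And>v. 0 \<le> f v" "\<And>v. v \<notin> F \<Longrightarrow> f v = 0" "sum f F = 1"
  shows "f \<in> topspace (geom_realization D)"
proof -
  have supp: "{v. f v \<noteq> 0} \<subseteq> F"
    using assms(4) by blast
  have "finite F"
    using simplicial_complex_finite_face[OF assms(1,2)] .
  then have "sum f {v. f v \<noteq> 0} = sum f F"
    using supp by (intro sum.mono_neutral_left) auto
  moreover have "{v. f v \<noteq> 0} \<in> D"
    using simplicial_complex_subset_face[OF assms(1,2) supp] .
  ultimately show ?thesis
    unfolding topspace_geom_realization using assms(3,5) by auto
qed

lemma geom_realization_nonneg:
  "f \<in> topspace (geom_realization D) \<Longrightarrow> 0 \<le> f v"
  unfolding topspace_geom_realization by blast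

lemma sum_geom_realization:
  assumes "f \<in> topspace (geom_realization D)" "\<And>v. v \<notin> F \<Longrightarrow> f v = 0" "finite F"
  shows "sum f F = 1"
proof -
  have "sum f {v. f v \<noteq> 0} = sum f F"
    using assms(2,3) by (intro sum.mono_neutral_left) auto
  then show ?thesis
    using assms(1) unfolding topspace_geom_realization by auto
qed

lemma geom_realization_eqI:
  assumes "f \<in> topspace (geom_realization D)" "g \<in> topspace (geom_realization D)"
    and "finite F" "r \<in> F" "\<And>v. v \<notin> F \<Longrightarrow> f v = 0" "\<And>v. v \<notin> F \<Longrightarrow> g v = 0"
    and "\<And>v. v \<in> F - {r} \<Longrightarrow> f v = g v"
  shows "f = g"
proof
  fix v
  have "f r + sum f (F - {r}) = g r + sum g (F - {r})"
    using sum_geom_realization[OF assms(1,5,3)] sum_geom_realization[OF assms(2,6,3)]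
    by (simp add: sum.remove[OF assms(3,4)])
  moreover have "sum f (F - {r}) = sum g (F - {r})"
    using assms(7) by (rule sum.cong[OF refl])
  ultimately have "f r = g r"
    by simp
  then show "f v = g v"
    using assms(5-7) by (cases "v \<in> F") auto
qed

lemma vanishes_outside_unique_facet:
  assumes sc: "simplicial_complex D" and f: "f \<in> topspace (geom_realization D)"
    and pos: "\<forall>r\<in>R. 0 < f r" and unique: "\<And>U. U \<in> facets D \<Longrightarrow> R \<subseteq> U \<Longrightarrow> U = T"
    and v: "v \<notin> T"
  shows "f v = 0"
proof -
  have "{v. f v \<noteq> 0} \<in> D"
    using f unfolding topspace_geom_realization by blast
  then obtain U where U: "U \<in> facets D" "{v. f v \<noteq> 0} \<subseteq> U"
    using face_subset_facet[OF sc] by blast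
  moreover have "R \<subseteq> {v. f v \<noteq> 0}"
    using pos by force
  ultimately have "U = T"
    using unique by blast
  then show ?thesis
    using U(2) v by blast
qed

lemma barycentre_in_geom_realization:
  assumes sc: "simplicial_complex D" and R: "R \<in> D" "R \<noteq> {}"
  shows "(\<lambda>v. if v \<in> R then 1 / real (card R) else 0) \<in> topspace (geom_realization D)"
proof (rule in_geom_realizationI[OF sc R(1)])
  have "card R > 0"
    using R simplicial_complex_finite_face[OF sc R(1)] by (simp add: card_gt_0_iff)
  then show "(\<Sum>v\<in>R. if v \<in> R then 1 / real (card R) else 0) = 1"
    by simp
qed auto

lemma simplex_coordinates:
  assumes T: "finite T" "card T = Suc m" and r: "r \<in> T"
  obtains \<kappa> where "continuous_map (geom_realization D) (Euclidean_space m) \<kappa>"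
    "inj_on \<kappa> {f \<in> topspace (geom_realization D). \<forall>v. v \<notin> T \<longrightarrow> f v = 0}"
    "\<forall>f\<in>topspace (geom_realization D). \<forall>i. 0 \<le> \<kappa> f i"
    "\<forall>v\<in>T - {r}. \<exists>i<m. \<forall>f. \<kappa> f i = f v"
proof -
  have "card (T - {r}) = m"
    using T r by simp
  then obtain \<iota> where \<iota>: "bij_betw \<iota> {0..<m} (T - {r})"
    using ex_bij_betw_nat_finite[of "T - {r}"] T(1) by auto
  define \<kappa> where "\<kappa> = (\<lambda>f::'a \<Rightarrow> real. \<lambda>i. if i < m then f (\<iota> i) else 0)"
  have index: "\<forall>v\<in>T - {r}. \<exists>i<m. \<forall>f. \<kappa> f i = f v"
  proof
    fix v assume "v \<in> T - {r}"
    then have "v \<in> \<iota> ` {0..<m}"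
      using \<iota> unfolding bij_betw_def by blast
    then obtain i where "i < m" "\<iota> i = v"
      by auto
    then show "\<exists>i<m. \<forall>f. \<kappa> f i = f v"
      unfolding \<kappa>_def by (intro exI[of _ i]) simp
  qed
  have "continuous_map (geom_realization D) (Euclidean_space m) \<kappa>"
  proof (rule continuous_map_into_Euclidean_space)
    show "continuous_map (geom_realization D) euclideanreal (\<lambda>f. \<kappa> f i)" for i
      unfolding \<kappa>_def using continuous_map_geom_realization_coordinate by (cases "i < m") auto
  qed (auto simp: \<kappa>_def topspace_Euclidean_space)
  moreover have "inj_on \<kappa> {f \<in> topspace (geom_realization D). \<forall>v. v \<notin> T \<longrightarrow> f v = 0}"
  proof (rule inj_onI)
    fix f g assume f: "f \<in> {f \<in> topspace (geom_realization D). \<forall>v. v \<notin> T \<longrightarrow> f v = 0}"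
      and g: "g \<in> {f \<in> topspace (geom_realization D). \<forall>v. v \<notin> T \<longrightarrow> f v = 0}"
      and fg: "\<kappa> f = \<kappa> g"
    have "f v = g v" if "v \<in> T - {r}" for v
      using index that fg by metis
    then show "f = g"
      using geom_realization_eqI[of f D g T r] f g T(1) r by blast
  qed
  moreover have "\<forall>f\<in>topspace (geom_realization D). \<forall>i. 0 \<le> \<kappa> f i"
    unfolding \<kappa>_def using geom_realization_nonneg by auto
  ultimately show thesis
    using that index by blast
qed

section \<open>Every ridge of a locally Euclidean realization lies in exactly two facets\<close>

lemma locally_Euclidean_open_in_simplex_interior:
  assumes X: "locally_Euclidean m (geom_realization D)"
    and A: "openin (geom_realization D) A" "\<forall>f\<in>A. \<forall>v. v \<notin> T \<longrightarrow> f v = 0"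
    and T: "finite T" "card T = Suc m" "1 \<le> m"
    and f0: "f0 \<in> A" and a: "a \<in> T"
  shows "0 < f0 a"
proof -
  have "card (T - {a}) = m"
    using T(1,2) a by simp
  then have "T - {a} \<noteq> {}"
    using T(3) by (metis card.empty not_one_le_zero)
  then obtain r where r: "r \<in> T" "r \<noteq> a"
    by blast
  obtain \<kappa> where \<kappa>: "continuous_map (geom_realization D) (Euclidean_space m) \<kappa>"
      "inj_on \<kappa> {f \<in> topspace (geom_realization D). \<forall>v. v \<notin> T \<longrightarrow> f v = 0}"
      "\<forall>f\<in>topspace (geom_realization D). \<forall>i. 0 \<le> \<kappa> f i"
      "\<forall>v\<in>T - {r}. \<exists>i<m. \<forall>f. \<kappa> f i = f v"
    by (rule simplex_coordinates[where D = D, OF T(1,2) r(1)])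
  obtain B e where B: "openin (Euclidean_space m) B"
    and e: "continuous_map (subtopology (Euclidean_space m) B) (geom_realization D) e"
      "inj_on e B" "e ` B \<subseteq> A" "f0 \<in> e ` B"
    by (rule locally_Euclidean_parametrization[OF X A(1) f0])
  have A_sub: "A \<subseteq> {f \<in> topspace (geom_realization D). \<forall>v. v \<notin> T \<longrightarrow> f v = 0}"
    using openin_subset[OF A(1)] A(2) by blast
  have "openin (Euclidean_space m) (\<kappa> ` e ` B)"
    using invariance_of_domain_Euclidean_space[OF B continuous_map_compose[OF e(1) \<kappa>(1)]]
      comp_inj_on[OF e(2) inj_on_subset[OF \<kappa>(2)]] e(3) A_sub by (simp add: image_comp)
  moreover have "\<forall>z\<in>\<kappa> ` e ` B. \<forall>i. 0 \<le> z i"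
    using \<kappa>(3) e(3) A_sub by blast
  moreover obtain i0 where "i0 < m" "\<forall>f. \<kappa> f i0 = f a"
    using \<kappa>(4) a r by blast
  ultimately show ?thesis
    using openin_Euclidean_space_nonneg_imp_pos[of m "\<kappa> ` e ` B" "\<kappa> f0" i0] e(4) by simp
qed

lemma ridge_in_second_facet:
  assumes sc: "simplicial_complex D" and card: "\<And>T. T \<in> facets D \<Longrightarrow> card T = d" and d: "2 \<le> d"
    and X: "locally_Euclidean (d - 1) (geom_realization D)"
    and T: "T \<in> facets D" and a: "a \<in> T"
  shows "\<exists>U\<in>facets D. U \<noteq> T \<and> T - {a} \<subseteq> U"
proof (rule ccontr)
  assume "\<not> ?thesis"
  then have unique: "U = T" if "U \<in> facets D" "T - {a} \<subseteq> U" for U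
    using that by blast
  define R where "R = T - {a}"
  have finT: "finite T"
    using simplicial_complex_finite_face[OF sc facet_in_complex[OF T]] .
  have cardR: "card R = d - 1"
    unfolding R_def using card[OF T] a finT by simp
  then have "R \<noteq> {}"
    using d by auto
  define A where "A = {f \<in> topspace (geom_realization D). \<forall>r\<in>R. 0 < f r}"
  have A_open: "openin (geom_realization D) A"
    unfolding A_def using finT
    by (intro openin_all_positive[where f = "\<lambda>r f. f r"])
      (auto simp: R_def continuous_map_geom_realization_coordinate)
  have A_supp: "\<forall>f\<in>A. \<forall>v. v \<notin> T \<longrightarrow> f v = 0"
    using vanishes_outside_unique_facet[OF sc _ _ unique] unfolding A_def R_def by blast
  define f0 where "f0 = (\<lambda>v. if v \<in> R then 1 / real (card R) else 0)"
  have "R \<in> D"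
    unfolding R_def using simplicial_complex_subset_face[OF sc facet_in_complex[OF T]] by blast
  then have "f0 \<in> A"
    unfolding A_def f0_def using barycentre_in_geom_realization[OF sc] \<open>R \<noteq> {}\<close> cardR d by auto
  moreover have "card T = Suc (d - 1)" "1 \<le> d - 1"
    using card[OF T] d by auto
  ultimately have "0 < f0 a"
    using locally_Euclidean_open_in_simplex_interior[OF X A_open A_supp finT] a by blast
  then show False
    unfolding f0_def R_def by simp
qed

text \<open>For a bijection \<open>\<rho>\<close> from R onto \<open>{0..<m}\<close>, \<open>hinge_map\<close> sends \<open>hinge_domain m\<close>
  into the union of the simplices \<open>R + a\<close> and \<open>R + b\<close>: a coordinate \<open>i < m - 1\<close> is the weight of the
  vertex of R with \<open>\<rho>\<close>-index i, the last vertex of R takes the slack, and coordinate \<open>m - 1\<close> is a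
  signed height over R, positive towards a and negative towards b.\<close>

definition hinge_slack :: "nat \<Rightarrow> (nat \<Rightarrow> real) \<Rightarrow> real" where
  "hinge_slack m y = 1 - (\<Sum>i<m - 1. y i) - \<bar>y (m - 1)\<bar>"

definition hinge_domain :: "nat \<Rightarrow> (nat \<Rightarrow> real) set" where
  "hinge_domain m = {y \<in> topspace (Euclidean_space m). (\<forall>i<m - 1. 0 < y i) \<and> 0 < hinge_slack m y}"

definition hinge_map :: "nat \<Rightarrow> ('a \<Rightarrow> nat) \<Rightarrow> 'a set \<Rightarrow> 'a \<Rightarrow> 'a \<Rightarrow> (nat \<Rightarrow> real) \<Rightarrow> 'a \<Rightarrow> real" where
  "hinge_map m \<rho> R a b y v =
     (if v \<in> R then (if \<rho> v < m - 1 then y (\<rho> v) else hinge_slack m y)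
      else if v = a then max (y (m - 1)) 0 else if v = b then max (- y (m - 1)) 0 else 0)"

lemma openin_hinge_domain: "openin (Euclidean_space m) (hinge_domain m)"
proof -
  have coord: "continuous_map (Euclidean_space m) euclideanreal (\<lambda>y. y i)" for i
    using continuous_map_Euclidean_space_coordinate[of m UNIV] by simp
  have slack: "continuous_map (Euclidean_space m) euclideanreal (hinge_slack m)"
    unfolding hinge_slack_def by (intro continuous_intros coord) auto
  have "openin (Euclidean_space m) {y \<in> topspace (Euclidean_space m). 0 < hinge_slack m y}"
    using openin_continuous_map_preimage[OF slack, of "{0<..}"] by simp
  moreover have "openin (Euclidean_space m) {y \<in> topspace (Euclidean_space m). \<forall>i\<in>{..<m - 1}. 0 < y i}"
    using coord by (intro openin_all_positive) auto
  ultimately have "openin (Euclidean_space m)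
      ({y \<in> topspace (Euclidean_space m). \<forall>i\<in>{..<m - 1}. 0 < y i}
        \<inter> {y \<in> topspace (Euclidean_space m). 0 < hinge_slack m y})"
    by (intro openin_Int)
  moreover have "{y \<in> topspace (Euclidean_space m). \<forall>i\<in>{..<m - 1}. 0 < y i}
        \<inter> {y \<in> topspace (Euclidean_space m). 0 < hinge_slack m y} = hinge_domain m"
    unfolding hinge_domain_def by blast
  ultimately show ?thesis
    by simp
qed

lemma sum_hinge_map_ridge:
  assumes \<rho>: "bij_betw \<rho> R {0..<m}" and m: "1 \<le> m"
  shows "(\<Sum>v\<in>R. hinge_map m \<rho> R a b y v) = 1 - \<bar>y (m - 1)\<bar>"
proof -
  have "(\<Sum>v\<in>R. hinge_map m \<rho> R a b y v)
      = (\<Sum>v\<in>R. (\<lambda>i. if i < m - 1 then y i else hinge_slack m y) (\<rho> v))"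
    unfolding hinge_map_def by (intro sum.cong) auto
  also have "\<dots> = (\<Sum>i\<in>{0..<m}. if i < m - 1 then y i else hinge_slack m y)"
    by (rule sum.reindex_bij_betw[OF \<rho>])
  also have "\<dots> = (\<Sum>i<m - 1. y i) + hinge_slack m y"
    using m by (cases m) (simp_all add: atLeast0LessThan)
  finally show ?thesis
    unfolding hinge_slack_def by simp
qed

lemma hinge_map_in_geom_realization:
  assumes sc: "simplicial_complex D" and faces: "insert a R \<in> D" "insert b R \<in> D"
    and ab: "a \<noteq> b" "a \<notin> R" "b \<notin> R" and R: "finite R"
    and \<rho>: "bij_betw \<rho> R {0..<m}" and m: "1 \<le> m" and y: "y \<in> hinge_domain m"
  shows "hinge_map m \<rho> R a b y \<in> topspace (geom_realization D)"
proof -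
  have pos: "\<forall>i<m - 1. 0 < y i" "0 < hinge_slack m y"
    using y unfolding hinge_domain_def by auto
  have nonneg: "0 \<le> hinge_map m \<rho> R a b y v" for v
    using pos unfolding hinge_map_def by (auto simp: less_imp_le)
  show ?thesis
  proof (cases "0 \<le> y (m - 1)")
    case True
    show ?thesis
    proof (rule in_geom_realizationI[OF sc faces(1) nonneg])
      show "hinge_map m \<rho> R a b y v = 0" if "v \<notin> insert a R" for v
        using that True unfolding hinge_map_def by auto
      show "sum (hinge_map m \<rho> R a b y) (insert a R) = 1"
        using sum_hinge_map_ridge[OF \<rho> m, of a b y] True ab R unfolding hinge_map_def by simp
    qed
  next
    case False
    show ?thesis
    proof (rule in_geom_realizationI[OF sc faces(2) nonneg])
      show "hinge_map m \<rho> R a b y v = 0" if "v \<notin> insert b R" for v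
        using that False unfolding hinge_map_def by auto
      show "sum (hinge_map m \<rho> R a b y) (insert b R) = 1"
        using sum_hinge_map_ridge[OF \<rho> m, of a b y] False ab R unfolding hinge_map_def by simp
    qed
  qed
qed

lemma continuous_map_hinge_map:
  assumes sc: "simplicial_complex D" and faces: "insert a R \<in> D" "insert b R \<in> D"
    and ab: "a \<noteq> b" "a \<notin> R" "b \<notin> R" and R: "finite R"
    and \<rho>: "bij_betw \<rho> R {0..<m}" and m: "1 \<le> m"
  shows "continuous_map (subtopology (Euclidean_space m) (hinge_domain m)) (geom_realization D)
    (hinge_map m \<rho> R a b)"
proof (rule continuous_map_into_geom_realization)
  have "continuous_map (subtopology (Euclidean_space m) (hinge_domain m)) euclideanreal (hinge_slack m)"
    unfolding hinge_slack_def by (intro continuous_intros) auto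
  then show "continuous_map (subtopology (Euclidean_space m) (hinge_domain m)) euclideanreal
      (\<lambda>y. hinge_map m \<rho> R a b y v)" for v
    unfolding hinge_map_def by (auto intro!: continuous_intros)
  show "hinge_map m \<rho> R a b y \<in> topspace (geom_realization D)"
    if "y \<in> topspace (subtopology (Euclidean_space m) (hinge_domain m))" for y
    using hinge_map_in_geom_realization[OF assms] that by simp
qed

lemma inj_on_hinge_map:
  assumes ab: "a \<noteq> b" "a \<notin> R" "b \<notin> R" and \<rho>: "bij_betw \<rho> R {0..<m}"
  shows "inj_on (hinge_map m \<rho> R a b) (hinge_domain m)"
proof (rule inj_onI)
  fix y z assume y: "y \<in> hinge_domain m" and z: "z \<in> hinge_domain m"
    and yz: "hinge_map m \<rho> R a b y = hinge_map m \<rho> R a b z"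
  show "y = z"
  proof
    fix i
    consider "i < m - 1" | "i = m - 1" | "m \<le> i"
      by linarith
    then show "y i = z i"
    proof cases
      case 1
      then have "i \<in> \<rho> ` R"
        using \<rho> unfolding bij_betw_def by auto
      then obtain v where "v \<in> R" "\<rho> v = i"
        by blast
      then show ?thesis
        using fun_cong[OF yz, of v] 1 unfolding hinge_map_def by simp
    next
      case 2
      have "y i = hinge_map m \<rho> R a b y a - hinge_map m \<rho> R a b y b"
        "z i = hinge_map m \<rho> R a b z a - hinge_map m \<rho> R a b z b"
        unfolding hinge_map_def 2 using ab by auto
      then show ?thesis
        using yz by simp
    next
      case 3
      then show ?thesis
        using y z unfolding hinge_domain_def topspace_Euclidean_space by auto
    qed
  qed
qed

lemma hinge_domain_base_point:
  assumes "1 \<le> m"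
  shows "(\<lambda>i. if i < m - 1 then 1 / (2 * real m) else 0) \<in> hinge_domain m"
proof -
  have "(\<Sum>i<m - 1. if i < m - 1 then 1 / (2 * real m) else 0) = real (m - 1) / (2 * real m)"
    by simp
  also have "\<dots> < 1"
    using assms by (simp add: field_simps)
  finally show ?thesis
    unfolding hinge_domain_def hinge_slack_def topspace_Euclidean_space using assms by auto
qed

lemma facet_eq_insert_ridge:
  assumes sc: "simplicial_complex D" and card: "\<And>T. T \<in> facets D \<Longrightarrow> card T = d"
    and U: "U \<in> facets D" and R: "R \<subseteq> U" "card R = d - 1" and d: "1 \<le> d"
  obtains b where "b \<notin> R" "U = insert b R"
proof -
  have "finite U"
    using simplicial_complex_finite_face[OF sc facet_in_complex[OF U]] .
  then have "card (U - R) = 1"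
    using card[OF U] R d by (simp add: card_Diff_subset finite_subset)
  then obtain b where "U - R = {b}"
    by (rule card_1_singletonE)
  then show thesis
    using that R(1) by blast
qed

lemma continuous_map_path_to_vertex:
  assumes sc: "simplicial_complex D" and F: "F \<in> D" "c \<in> F"
    and f0: "f0 \<in> topspace (geom_realization D)" "\<And>v. v \<notin> F \<Longrightarrow> f0 v = 0"
  shows "continuous_map euclideanreal (geom_realization D)
    (\<lambda>t v. (1 - min \<bar>t\<bar> 1) * f0 v + (if v = c then min \<bar>t\<bar> 1 else 0))"
proof (rule continuous_map_into_geom_realization)
  show "continuous_map euclideanreal euclideanreal
      (\<lambda>t. (1 - min \<bar>t\<bar> 1) * f0 v + (if v = c then min \<bar>t\<bar> 1 else 0))" for v
    by (cases "v = c") (auto intro!: continuous_intros)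
  fix t :: real
  have finF: "finite F"
    using simplicial_complex_finite_face[OF sc F(1)] .
  have s: "0 \<le> min \<bar>t\<bar> 1" "min \<bar>t\<bar> 1 \<le> (1::real)"
    by auto
  show "(\<lambda>v. (1 - min \<bar>t\<bar> 1) * f0 v + (if v = c then min \<bar>t\<bar> 1 else 0)) \<in> topspace (geom_realization D)"
  proof (rule in_geom_realizationI[OF sc F(1)])
    show "0 \<le> (1 - min \<bar>t\<bar> 1) * f0 v + (if v = c then min \<bar>t\<bar> 1 else 0)" for v
      using s geom_realization_nonneg[OF f0(1)] by simp
    show "(1 - min \<bar>t\<bar> 1) * f0 v + (if v = c then min \<bar>t\<bar> 1 else 0) = 0" if "v \<notin> F" for v
      using that f0(2) F(2) by auto
    have "sum f0 F = 1"
      using sum_geom_realization[OF f0(1) _ finF] f0(2) by blast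
    then show "(\<Sum>v\<in>F. (1 - min \<bar>t\<bar> 1) * f0 v + (if v = c then min \<bar>t\<bar> 1 else 0)) = 1"
      using finF F(2) by (simp add: sum.distrib sum_distrib_left[symmetric])
  qed
qed

lemma locally_Euclidean_no_third_coface:
  assumes X: "locally_Euclidean m (geom_realization D)" and sc: "simplicial_complex D"
    and faces: "insert a R \<in> D" "insert b R \<in> D"
    and abc: "a \<noteq> b" "c \<noteq> a" "c \<noteq> b" "a \<notin> R" "b \<notin> R" "c \<notin> R"
    and R: "finite R" "card R = m" "1 \<le> m"
  shows "insert c R \<notin> D"
proof
  assume c_face: "insert c R \<in> D"
  obtain \<rho> where \<rho>: "bij_betw \<rho> R {0..<m}"
    using ex_bij_betw_finite_nat[OF R(1)] R(2) by blast
  let ?g = "hinge_map m \<rho> R a b"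
  have O: "openin (geom_realization D) (?g ` hinge_domain m)"
    using locally_Euclidean_invariance_of_domain[OF X openin_hinge_domain
        continuous_map_hinge_map[OF sc faces abc(1,4,5) R(1) \<rho> R(3)]
        inj_on_hinge_map[OF abc(1,4,5) \<rho>]] .
  define f0 where "f0 = ?g (\<lambda>i. if i < m - 1 then 1 / (2 * real m) else 0)"
  have f0_top: "f0 \<in> topspace (geom_realization D)"
    unfolding f0_def
    using hinge_map_in_geom_realization[OF sc faces abc(1,4,5) R(1) \<rho> R(3) hinge_domain_base_point[OF R(3)]] .
  have f0_R: "f0 v = 0" if "v \<notin> R" for v
    using that abc unfolding f0_def hinge_map_def by auto
  define \<gamma> where "\<gamma> = (\<lambda>t v. (1 - min \<bar>t\<bar> 1) * f0 v + (if v = c then min \<bar>t\<bar> 1 else (0::real)))"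
  have \<gamma>_cont: "continuous_map euclideanreal (geom_realization D) \<gamma>"
    unfolding \<gamma>_def using continuous_map_path_to_vertex[OF sc c_face _ f0_top] f0_R by blast
  have "\<gamma> 0 = f0"
    unfolding \<gamma>_def by (simp add: fun_eq_iff)
  then have "\<gamma> 0 \<in> ?g ` hinge_domain m"
    unfolding f0_def using hinge_domain_base_point[OF R(3)] by simp
  then obtain \<epsilon> :: real where \<epsilon>: "\<epsilon> > 0" "\<forall>t. \<bar>t\<bar> < \<epsilon> \<longrightarrow> \<gamma> t \<in> ?g ` hinge_domain m"
    by (rule continuous_path_near_zero_in_openin[OF \<gamma>_cont O])
  then have "\<gamma> (\<epsilon> / 2) \<in> ?g ` hinge_domain m"
    by simp
  moreover have "\<gamma> (\<epsilon> / 2) c > 0"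
    unfolding \<gamma>_def using f0_R abc(6) \<epsilon>(1) by simp
  moreover have "?g y c = 0" for y
    using abc unfolding hinge_map_def by auto
  ultimately show False
    by auto
qed

lemma ridge_in_at_most_two_facets:
  assumes sc: "simplicial_complex D" and card: "\<And>T. T \<in> facets D \<Longrightarrow> card T = d" and d: "2 \<le> d"
    and X: "locally_Euclidean (d - 1) (geom_realization D)"
    and T: "T \<in> facets D" and a: "a \<in> T"
    and U1: "U1 \<in> facets D" "U1 \<noteq> T" "T - {a} \<subseteq> U1"
    and U2: "U2 \<in> facets D" "U2 \<noteq> T" "T - {a} \<subseteq> U2"
  shows "U1 = U2"
proof (rule ccontr)
  assume U12: "U1 \<noteq> U2"
  define R where "R = T - {a}"
  have finT: "finite T"
    using simplicial_complex_finite_face[OF sc facet_in_complex[OF T]] .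
  have R: "finite R" "card R = d - 1" "1 \<le> d - 1"
    unfolding R_def using card[OF T] a finT d by auto
  have T_eq: "T = insert a R" "a \<notin> R"
    unfolding R_def using a by auto
  obtain b where b: "b \<notin> R" "U1 = insert b R"
    using facet_eq_insert_ridge[OF sc card U1(1) U1(3)[folded R_def] R(2)] d by auto
  obtain c where c: "c \<notin> R" "U2 = insert c R"
    using facet_eq_insert_ridge[OF sc card U2(1) U2(3)[folded R_def] R(2)] d by auto
  have "a \<noteq> b" "c \<noteq> a" "c \<noteq> b"
    using T_eq b c U1(2) U2(2) U12 by auto
  then have "insert c R \<notin> D"
    using locally_Euclidean_no_third_coface[OF X sc _ _ _ _ _ T_eq(2) b(1) c(1) R]
      facet_in_complex[OF T] facet_in_complex[OF U1(1)] T_eq(1) b(2) by blast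
  then show False
    using facet_in_complex[OF U2(1)] c(2) by simp
qed

lemma ex1_facet_across_ridge:
  assumes sc: "simplicial_complex D" and card: "\<And>T. T \<in> facets D \<Longrightarrow> card T = d" and d: "2 \<le> d"
    and X: "locally_Euclidean (d - 1) (geom_realization D)"
    and T: "T \<in> facets D" and a: "a \<in> T"
  shows "\<exists>!U. U \<in> facets D \<and> U \<noteq> T \<and> T - {a} \<subseteq> U"
  using ridge_in_second_facet[OF sc card d X T a] ridge_in_at_most_two_facets[OF sc card d X T a]
  by blast

section \<open>Star-like systems are determined by principal frames\<close>

lemma ex1_sink_Vk:
  assumes "good_orientation d D Or" "\<sigma> \<in> D" "card \<sigma> = d - k" "k \<le> d"
  shows "\<exists>!t. is_sink Or (Vk D \<sigma>) t"
  using assms unfolding good_orientation_def by auto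

lemma sink_principal_root:
  assumes "good_orientation d D Or" "\<sigma> \<in> D" "card \<sigma> = d - k" "k \<le> d"
  shows "is_sink Or (Vk D \<sigma>) (principal_root Or D \<sigma>)"
  unfolding principal_root_def using theI'[OF ex1_sink_Vk[OF assms]] .

lemma principal_root_eqI:
  assumes "good_orientation d D Or" "\<sigma> \<in> D" "card \<sigma> = d - k" "k \<le> d"
    and "is_sink Or (Vk D \<sigma>) t"
  shows "principal_root Or D \<sigma> = t"
  unfolding principal_root_def using the1_equality[OF ex1_sink_Vk[OF assms(1-4)] assms(5)] .

lemma ex1_system_member_containing_frame:
  assumes "k_system d D k SS" "k_frame d D k t N"
  shows "\<exists>!S. S \<in> SS \<and> insert t N \<subseteq> S"
  using assms unfolding k_system_def by blast

lemma sys_of_face_eqI: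
  assumes "k_system d D k SS" "k_frame d D k (principal_root Or D \<sigma>) (principal_leaves d D Or \<sigma>)"
    and "S \<in> SS" "insert (principal_root Or D \<sigma>) (principal_leaves d D Or \<sigma>) \<subseteq> S"
  shows "sys_of_face d D Or SS \<sigma> = S"
  unfolding sys_of_face_def
  using the1_equality[OF ex1_system_member_containing_frame[OF assms(1,2)]] assms(3,4) by blast

lemma sys_of_face_in_system:
  assumes "k_system d D k SS" "k_frame d D k (principal_root Or D \<sigma>) (principal_leaves d D Or \<sigma>)"
  shows "sys_of_face d D Or SS \<sigma> \<in> SS"
  unfolding sys_of_face_def
  using theI'[OF ex1_system_member_containing_frame[OF assms]] by blast

locale pure_pseudomanifold =
  fixes d :: nat and D :: "'a set set"
  assumes simplicial_complex: "simplicial_complex D"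
    and card_facet: "T \<in> facets D \<Longrightarrow> card T = d"
    and ex1_facet_across: "T \<in> facets D \<Longrightarrow> a \<in> T \<Longrightarrow> \<exists>!U. U \<in> facets D \<and> U \<noteq> T \<and> T - {a} \<subseteq> U"
begin

lemma finite_facet: "T \<in> facets D \<Longrightarrow> finite T"
  using simplicial_complex_finite_face[OF simplicial_complex facet_in_complex] .

lemma facet_subset_facet_eq: "T \<in> facets D \<Longrightarrow> U \<in> facets D \<Longrightarrow> T \<subseteq> U \<Longrightarrow> T = U"
  using finite_facet card_facet by (metis card_subset_eq)

definition opposite_facet :: "'a set \<Rightarrow> 'a \<Rightarrow> 'a set" where
  "opposite_facet T a = (THE U. U \<in> facets D \<and> U \<noteq> T \<and> T - {a} \<subseteq> U)"

lemma opposite_facet: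
  assumes "T \<in> facets D" "a \<in> T"
  shows "opposite_facet T a \<in> facets D" "opposite_facet T a \<noteq> T" "T - {a} \<subseteq> opposite_facet T a"
  using theI'[OF ex1_facet_across[OF assms]] unfolding opposite_facet_def by auto

lemma opposite_facet_unique:
  assumes "T \<in> facets D" "a \<in> T" "U \<in> facets D" "U \<noteq> T" "T - {a} \<subseteq> U"
  shows "opposite_facet T a = U"
  using ex1_facet_across[OF assms(1,2)] opposite_facet[OF assms(1,2)] assms(3-5) by blast

lemma not_in_opposite_facet:
  assumes "T \<in> facets D" "a \<in> T"
  shows "a \<notin> opposite_facet T a"
proof
  assume "a \<in> opposite_facet T a"
  then have "T \<subseteq> opposite_facet T a"
    using opposite_facet(3)[OF assms] by auto
  then show False
    using facet_subset_facet_eq[OF assms(1) opposite_facet(1)[OF assms]] opposite_facet(2)[OF assms] by auto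
qed

lemma fr_adj_opposite_facet:
  assumes "T \<in> facets D" "a \<in> T"
  shows "fr_adj d D T (opposite_facet T a)"
proof -
  have "T \<inter> opposite_facet T a = T - {a}"
    using not_in_opposite_facet[OF assms] opposite_facet(3)[OF assms] by auto
  moreover have "card (T - {a}) = d - 1"
    using assms card_facet finite_facet by auto
  ultimately show ?thesis
    unfolding fr_adj_def using opposite_facet[OF assms] assms(1) by auto
qed

lemma fr_adj_imp_opposite_facet:
  assumes "fr_adj d D T U"
  obtains a where "a \<in> T" "U = opposite_facet T a"
proof -
  have T: "T \<in> facets D" and U: "U \<in> facets D" "U \<noteq> T" and c: "card (T \<inter> U) = d - 1"
    using assms unfolding fr_adj_def by auto
  obtain a where a: "a \<in> T" "a \<notin> U"
    using facet_subset_facet_eq[OF T U(1)] U(2) by blast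
  have "T \<inter> U \<subseteq> T - {a}"
    using a by auto
  moreover have "card (T - {a}) = d - 1"
    using a finite_facet[OF T] card_facet[OF T] by auto
  ultimately have "T \<inter> U = T - {a}"
    using c finite_facet[OF T] by (metis card_subset_eq finite_Diff)
  then have "opposite_facet T a = U"
    using opposite_facet_unique[OF T a(1) U] by auto
  then show thesis
    using that a(1) by blast
qed

lemma inj_on_opposite_facet:
  assumes "T \<in> facets D"
  shows "inj_on (opposite_facet T) T"
proof (rule inj_onI)
  fix a b assume ab: "a \<in> T" "b \<in> T" "opposite_facet T a = opposite_facet T b"
  show "a = b"
  proof (rule ccontr)
    assume "a \<noteq> b"
    then have "T \<subseteq> opposite_facet T a"
      using opposite_facet(3)[OF assms ab(1)] opposite_facet(3)[OF assms ab(2)] ab(3) by auto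
    then show False
      using facet_subset_facet_eq[OF assms opposite_facet(1)[OF assms ab(1)]] opposite_facet(2)[OF assms ab(1)] by auto
  qed
qed

lemma neighbours_in_Vk:
  assumes "T \<in> facets D" "\<sigma> \<subseteq> T"
  shows "{u \<in> Vk D \<sigma>. fr_adj d D T u} = opposite_facet T ` (T - \<sigma>)"
proof safe
  fix u assume u: "u \<in> Vk D \<sigma>" "fr_adj d D T u"
  then obtain a where a: "a \<in> T" "u = opposite_facet T a"
    using fr_adj_imp_opposite_facet by blast
  then have "a \<notin> \<sigma>"
    using u(1) not_in_opposite_facet[OF assms(1) a(1)] unfolding Vk_def by auto
  then show "u \<in> opposite_facet T ` (T - \<sigma>)"
    using a by auto
next
  fix a assume a: "a \<in> T" "a \<notin> \<sigma>"
  show "opposite_facet T a \<in> Vk D \<sigma>"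
    unfolding Vk_def using opposite_facet[OF assms(1) a(1)] a assms(2) by auto
  show "fr_adj d D T (opposite_facet T a)"
    using fr_adj_opposite_facet[OF assms(1) a(1)] .
qed

lemma k_frame_principal:
  assumes "good_orientation d D Or" "\<sigma> \<in> D" "card \<sigma> = d - k" "k \<le> d"
  shows "k_frame d D k (principal_root Or D \<sigma>) (principal_leaves d D Or \<sigma>)"
proof -
  let ?t = "principal_root Or D \<sigma>"
  have t: "?t \<in> facets D" "\<sigma> \<subseteq> ?t"
    using sink_principal_root[OF assms] unfolding is_sink_def Vk_def by auto
  have "card (principal_leaves d D Or \<sigma>) = card (?t - \<sigma>)"
    unfolding principal_leaves_def neighbours_in_Vk[OF t]
    using inj_on_subset[OF inj_on_opposite_facet[OF t(1)]] by (simp add: card_image)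
  also have "\<dots> = k"
    using t card_facet finite_facet assms(3,4) by (simp add: card_Diff_subset finite_subset)
  finally show ?thesis
    unfolding k_frame_def principal_leaves_def using t neighbours_in_Vk[OF t] by auto
qed

lemma k_frame_opposite_vertices:
  assumes "k_frame d D k t N"
  obtains X where "X \<subseteq> t" "card X = k" "N = opposite_facet t ` X"
proof -
  have tF: "t \<in> facets D" and cardN: "card N = k" and adj: "\<forall>u\<in>N. fr_adj d D t u"
    using assms unfolding k_frame_def by auto
  define X where "X = {a \<in> t. opposite_facet t a \<in> N}"
  have X_sub: "X \<subseteq> t"
    unfolding X_def by blast
  have N_eq: "N = opposite_facet t ` X"
  proof
    show "N \<subseteq> opposite_facet t ` X"
    proof
      fix u assume u: "u \<in> N"
      then obtain a where "a \<in> t" "u = opposite_facet t a"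
        using adj fr_adj_imp_opposite_facet by blast
      with u show "u \<in> opposite_facet t ` X"
        unfolding X_def by blast
    qed
    show "opposite_facet t ` X \<subseteq> N"
      unfolding X_def by blast
  qed
  have "card X = k"
    using cardN card_image[OF inj_on_subset[OF inj_on_opposite_facet[OF tF] X_sub]] unfolding N_eq by simp
  with X_sub N_eq show thesis
    using that by blast
qed

lemma principal_frame_of_inward_frame:
  assumes go: "good_orientation d D Or" and frame: "k_frame d D k t N" and k: "k \<le> d"
    and inward: "\<forall>u\<in>N. \<not> Or t u"
  obtains \<sigma> where "\<sigma> \<in> D" "card \<sigma> = d - k"
    "principal_root Or D \<sigma> = t" "principal_leaves d D Or \<sigma> = N"
proof -
  have tF: "t \<in> facets D"
    using frame unfolding k_frame_def by blast
  obtain X where X: "X \<subseteq> t" "card X = k" "N = opposite_facet t ` X"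
    by (rule k_frame_opposite_vertices[OF frame])
  define \<sigma> where "\<sigma> = t - X"
  have \<sigma>_sub: "\<sigma> \<subseteq> t" and t_minus_\<sigma>: "t - \<sigma> = X"
    unfolding \<sigma>_def using X(1) by auto
  have card\<sigma>: "card \<sigma> = d - k"
    unfolding \<sigma>_def using card_Diff_subset[OF finite_subset[OF X(1) finite_facet[OF tF]] X(1)]
      X(2) card_facet[OF tF] by simp
  have \<sigma>D: "\<sigma> \<in> D"
    using simplicial_complex_subset_face[OF simplicial_complex facet_in_complex[OF tF] \<sigma>_sub] .
  have nbrs: "{u \<in> Vk D \<sigma>. fr_adj d D t u} = N"
    using neighbours_in_Vk[OF tF \<sigma>_sub] t_minus_\<sigma> X(3) by simp
  have "is_sink Or (Vk D \<sigma>) t"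
    unfolding is_sink_def
  proof
    show "t \<in> Vk D \<sigma>"
      unfolding Vk_def using tF \<sigma>_sub by blast
    show "\<forall>u\<in>Vk D \<sigma>. \<not> Or t u"
      using go nbrs inward unfolding good_orientation_def orientation_def by blast
  qed
  then have root: "principal_root Or D \<sigma> = t"
    using principal_root_eqI[OF go \<sigma>D card\<sigma> k] by blast
  have "principal_leaves d D Or \<sigma> = N"
    unfolding principal_leaves_def root using nbrs .
  with \<sigma>D card\<sigma> root show thesis
    using that by blast
qed

lemma star_like_member_eq_sys_of_face:
  assumes sl: "star_like d D k SS" and go: "good_orientation d D Or" and ac: "acyclic_orientation Or"
    and k: "k \<le> d" and S: "S \<in> SS"
  obtains \<sigma> where "\<sigma> \<in> D" "card \<sigma> = d - k" "S = sys_of_face d D Or SS \<sigma>"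
proof -
  have ks: "k_system d D k SS"
    using sl unfolding star_like_def by blast
  obtain t where t: "is_sink Or S t"
    using sl go ac S unfolding star_like_def by blast
  have reg: "k_regular_on d D k S"
    using ks S unfolding k_system_def by blast
  have tS: "t \<in> S" and tF: "t \<in> facets D"
    using t reg unfolding is_sink_def k_regular_on_def by auto
  define N where "N = {u \<in> S. fr_adj d D t u}"
  have "k_frame d D k t N"
    using reg tS tF unfolding N_def k_regular_on_def k_frame_def by blast
  moreover have "\<forall>u\<in>N. \<not> Or t u"
    using t unfolding N_def is_sink_def by blast
  ultimately obtain \<sigma> where \<sigma>: "\<sigma> \<in> D" "card \<sigma> = d - k"
    and root: "principal_root Or D \<sigma> = t" and leaves: "principal_leaves d D Or \<sigma> = N"
    using principal_frame_of_inward_frame[OF go _ k] by blast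
  have "insert t N \<subseteq> S"
    using tS unfolding N_def by blast
  then have "sys_of_face d D Or SS \<sigma> = S"
    using sys_of_face_eqI[OF ks k_frame_principal[OF go \<sigma> k] S] root leaves by simp
  with \<sigma> show thesis
    using that by blast
qed

lemma star_like_eq_sys_of_faces:
  assumes sl: "star_like d D k SS" and go: "good_orientation d D Or" and ac: "acyclic_orientation Or"
    and k: "k \<le> d"
  shows "SS = {sys_of_face d D Or SS \<sigma> | \<sigma>. \<sigma> \<in> D \<and> card \<sigma> = d - k}"
proof
  show "SS \<subseteq> {sys_of_face d D Or SS \<sigma> | \<sigma>. \<sigma> \<in> D \<and> card \<sigma> = d - k}"
  proof
    fix S assume "S \<in> SS"
    then obtain \<sigma> where "\<sigma> \<in> D" "card \<sigma> = d - k" "S = sys_of_face d D Or SS \<sigma>"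
      by (rule star_like_member_eq_sys_of_face[OF sl go ac k])
    then show "S \<in> {sys_of_face d D Or SS \<sigma> | \<sigma>. \<sigma> \<in> D \<and> card \<sigma> = d - k}"
      by blast
  qed
  have "k_system d D k SS"
    using sl unfolding star_like_def by blast
  then show "{sys_of_face d D Or SS \<sigma> | \<sigma>. \<sigma> \<in> D \<and> card \<sigma> = d - k} \<subseteq> SS"
    using sys_of_face_in_system k_frame_principal[OF go _ _ k] by blast
qed

lemma star_like_eq_iff_sys_of_faces_eq:
  assumes sl: "star_like d D k SS" and sl': "star_like d D k SS'"
    and go: "good_orientation d D Or" and ac: "acyclic_orientation Or" and k: "k \<le> d"
  shows "SS = SS' \<longleftrightarrow>
    (\<forall>\<sigma>\<in>D. card \<sigma> = d - k \<longrightarrow> sys_of_face d D Or SS \<sigma> = sys_of_face d D Or SS' \<sigma>)"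
proof
  assume agree: "\<forall>\<sigma>\<in>D. card \<sigma> = d - k \<longrightarrow> sys_of_face d D Or SS \<sigma> = sys_of_face d D Or SS' \<sigma>"
  have "{sys_of_face d D Or SS \<sigma> | \<sigma>. \<sigma> \<in> D \<and> card \<sigma> = d - k}
      = {sys_of_face d D Or SS' \<sigma> | \<sigma>. \<sigma> \<in> D \<and> card \<sigma> = d - k}"
    using agree by auto
  then show "SS = SS'"
    using star_like_eq_sys_of_faces[OF sl go ac k] star_like_eq_sys_of_faces[OF sl' go ac k] by simp
qed simp

end

theorem lemma4p5:
  fixes d k :: nat and D :: "'a set set" and SS :: "'a set set set"
    and Or :: "'a set \<Rightarrow> 'a set \<Rightarrow> bool"
  assumes "d \<ge> 3"
    and "simplicial_sphere d D"
    and "shellable d D"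
    and "2 \<le> k" and "k \<le> d - 1"
    and "star_like d D k SS"
    and "good_orientation d D Or" and "acyclic_orientation Or"
  shows "SS = {sys_of_face d D Or SS \<sigma> | \<sigma>. \<sigma> \<in> D \<and> card \<sigma> = d - k}
    \<and> (\<forall>SS'. star_like d D k SS' \<longrightarrow>
          (SS = SS' \<longleftrightarrow> (\<forall>\<sigma>\<in>D. card \<sigma> = d - k \<longrightarrow>
              sys_of_face d D Or SS \<sigma> = sys_of_face d D Or SS' \<sigma>)))"
proof -
  have sc: "simplicial_complex D" and card: "\<And>T. T \<in> facets D \<Longrightarrow> card T = d"
    and "locally_Euclidean (d - 1) (geom_realization D)"
    using assms(2) locally_Euclidean_homeomorphic_space[OF _ locally_Euclidean_nsphere]
    unfolding simplicial_sphere_def by auto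
  then interpret pure_pseudomanifold d D
    using ex1_facet_across_ridge[OF sc card] assms(1) by unfold_locales auto
  have k: "k \<le> d"
    using assms(5) by simp
  show ?thesis
    using star_like_eq_sys_of_faces[OF assms(6-8) k]
      star_like_eq_iff_sys_of_faces_eq[OF assms(6) _ assms(7,8) k] by blast
qed

end
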